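(* Let $d,a,b$ be positive integers, $r=(d+2b)/d$, $R=(a+d)/d$, with $R\ge3r$, and let $x_1$ be as in the context. Then $\rho:=x_1-r$ satisfies $\rho<\frac{r-1}{2}$.
   Context: For $t\in\mathbb C\setminus\{\pm1,\pm r\}$ let $\Phi(t)=d\log|t+r|-d\log|t-r|+(a+d)(\log|t-1|-\log|t+1|)$. Under $R\ge3r$ there is a unique $x_1\in(r,\infty)$ with $\Phi(x_1)=0$; moreover $\Phi>0$ on $(r,x_1)$ and $\Phi<0$ on $(x_1,\infty)$. *)

theory Defs
  imports Complex_Main
begin

text \<open>The function Phi of the paper, restricted to real arguments t
  (the zero x1 lies on the real axis). Parameters: d, a, r.\<close>
definition Phi :: "real \<Rightarrow> real \<Rightarrow> real \<Rightarrow> real \<Rightarrow> real" where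
  "Phi d a r t = d * ln \<bar>t + r\<bar> - d * ln \<bar>t - r\<bar>
                 + (a + d) * (ln \<bar>t - 1\<bar> - ln \<bar>t + 1\<bar>)"

end

theory Submission imports Defs begin

(* Write lr(s,t) = ln((t+s)/(t-s)) for 0 < s < t.  For t > r > 1 the function
   Phi equals d*lr(r,t) - (a+d)*lr(1,t), so the zero x1 satisfies
   lr(r,x1) = R * lr(1,x1) >= 3r * lr(1,x1), using R >= 3r and lr(1,x1) > 0.
   The theorem therefore follows once we show the strict reverse inequality
   lr(r,t) < 3r * lr(1,t) for every t >= (3r-1)/2, i.e. for rho >= (r-1)/2.
   This comparison is proved in two regimes:
   - for 1 < r <= 2 we compare (t+r)/(t-r) with ((t+1)/(t-1))^3 by a
     polynomial identity, giving lr(r,t) < 3 lr(1,t) <= 3r lr(1,t);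
   - for r > 2 we have t >= 5r/4, hence 2t^2 > 3r^2, and the elementary
     bounds 2(y-1)/(y+1) <= ln y <= (y - 1/y)/2 (for y >= 1) give
     lr(r,t) <= 2rt/(t^2-r^2) < 6r/t <= 3r lr(1,t). *)

(* Upper bound ln y <= (y - 1/y)/2 on [1,oo): the difference vanishes at 1
   and has derivative (y-1)^2/(2y^2) >= 0. *)
lemma ln_le_half_diff_inverse:
  fixes y :: real assumes "y \<ge> 1" shows "ln y \<le> (y - 1/y) / 2"
proof -
  let ?f = "\<lambda>x::real. (x - 1/x) / 2 - ln x"
  have "?f 1 \<le> ?f y"
  proof (rule DERIV_nonneg_imp_increasing_open[OF assms])
    fix x :: real assume x: "1 < x" "x < y"
    have "DERIV ?f x :> ((1 + 1/x^2)/2 - 1/x)"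
      using x by (auto intro!: derivative_eq_intros simp: power2_eq_square field_simps)
    moreover have "(1 + 1/x^2)/2 - 1/x = (x-1)^2 / (2*x^2)"
      using x by (simp add: field_simps power2_eq_square)
    ultimately show "\<exists>D. DERIV ?f x :> D \<and> D \<ge> 0" by force
  qed (intro continuous_intros; auto)
  thus ?thesis by simp
qed

(* Lower bound ln y >= 2(y-1)/(y+1) on [1,oo): the difference vanishes at 1
   and has derivative (y-1)^2/(y(y+1)^2) >= 0. *)
lemma ln_ge_two_ratio:
  fixes y :: real assumes "y \<ge> 1" shows "2 * (y - 1) / (y + 1) \<le> ln y"
proof -
  let ?f = "\<lambda>x::real. ln x - 2 * (x - 1) / (x + 1)"
  have "?f 1 \<le> ?f y"
  proof (rule DERIV_nonneg_imp_increasing_open[OF assms])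
    fix x :: real assume x: "1 < x" "x < y"
    have "DERIV ?f x :> (1/x - 4/(x+1)^2)"
      using x by (auto intro!: derivative_eq_intros simp: power2_eq_square field_simps)
    moreover have "1/x - 4/(x+1)^2 = (x-1)^2 / (x*(x+1)^2)"
      using x by (simp add: divide_simps) (simp add: power2_eq_square algebra_simps)
    moreover have "(x-1)^2 / (x*(x+1)^2) \<ge> 0" using x by simp
    ultimately show "\<exists>D. DERIV ?f x :> D \<and> D \<ge> 0" by metis
  qed (intro continuous_intros; auto)
  thus ?thesis by simp
qed

definition log_ratio :: "real \<Rightarrow> real \<Rightarrow> real" where
  "log_ratio s t = ln ((t + s) / (t - s))"

lemma Phi_eq_log_ratio:
  assumes "1 < r" "r < t"
  shows "Phi d a r t = d * log_ratio r t - (a + d) * log_ratio 1 t"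
  using assms
  by (simp add: Phi_def log_ratio_def ln_div algebra_simps)

lemma log_ratio_pos:
  assumes "0 < s" "s < t" shows "0 < log_ratio s t"
  using assms by (simp add: log_ratio_def)

lemma log_ratio_upper:
  assumes "0 < s" "s < t" shows "log_ratio s t \<le> 2 * s * t / (t^2 - s^2)"
proof -
  have "(t + s)/(t - s) \<ge> 1" using assms by simp
  hence "log_ratio s t \<le> ((t + s)/(t - s) - 1/((t + s)/(t - s))) / 2"
    unfolding log_ratio_def by (rule ln_le_half_diff_inverse)
  also have "\<dots> = 2 * s * t / (t^2 - s^2)"
  proof -
    have "t^2 \<noteq> s^2" using assms by (simp add: power2_eq_iff)
    thus ?thesis using assms
      by (simp add: divide_simps power2_eq_square) (simp add: algebra_simps)
  qed
  finally show ?thesis .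
qed

lemma log_ratio_one_lower:
  assumes "1 < t" shows "2 / t \<le> log_ratio 1 t"
proof -
  have "(t + 1)/(t - 1) \<ge> 1" using assms by simp
  hence "2 * ((t + 1)/(t - 1) - 1) / ((t + 1)/(t - 1) + 1) \<le> log_ratio 1 t"
    unfolding log_ratio_def by (rule ln_ge_two_ratio)
  moreover have "2 * ((t + 1)/(t - 1) - 1) / ((t + 1)/(t - 1) + 1) = 2 / t"
    using assms by (simp add: divide_simps)
  ultimately show ?thesis by simp
qed

(* Cube comparison: (t+1)^3 (t-r) - (t+r)(t-1)^3 = 2t((3-r)t^2 + 1 - 3r),
   so lr(r,t) < 3 lr(1,t) as soon as (3-r)t^2 > 3r - 1. *)
lemma log_ratio_lt_three:
  assumes "0 < r" "1 < t" "r < t" and cubic: "3*r - 1 < (3 - r) * t^2"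
  shows "log_ratio r t < 3 * log_ratio 1 t"
proof -
  have "(t+1)^3*(t-r) - (t+r)*(t-1)^3 = 2*t*((3-r)*t^2 + 1 - 3*r)"
    by (simp add: power2_eq_square power3_eq_cube algebra_simps)
  moreover have "2*t*((3-r)*t^2 + 1 - 3*r) > 0" using cubic assms by simp
  ultimately have "(t+r)*(t-1)^3 < (t+1)^3*(t-r)" by simp
  hence "(t+r)/(t-r) < ((t+1)/(t-1))^3"
    using assms by (simp add: divide_simps power_divide)
  hence "log_ratio r t < ln (((t+1)/(t-1))^3)"
    unfolding log_ratio_def using assms by simp
  thus ?thesis by (simp add: log_ratio_def ln_realpow)
qed

(* Regime 1 < r <= 2: the cubic condition holds at t = (3r-1)/2, since
   (3r-1)(3-r) - 4 = (3r-7)(1-r) > 0, and its left side grows with t. *)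
lemma log_ratio_bound_small_r:
  assumes "1 < r" "r \<le> 2" "(3*r - 1)/2 \<le> t"
  shows "log_ratio r t < 3 * r * log_ratio 1 t"
proof -
  have "r < t" using assms by simp
  have "(3*r - 1) * (3 - r) - 4 = (3*r - 7) * (1 - r)" by (simp add: algebra_simps)
  moreover have "(3*r - 7) * (1 - r) > 0" using assms by (intro mult_neg_neg) auto
  ultimately have "4 < (3*r - 1) * (3 - r)" by simp
  hence "(3*r - 1) * 1 < (3*r - 1) * ((3*r - 1) * (3 - r) / 4)"
    using assms by (intro mult_strict_left_mono) auto
  also have "\<dots> = (3 - r) * ((3*r - 1)/2)^2" by (simp add: power2_eq_square)
  also have "\<dots> \<le> (3 - r) * t^2"
    using assms by (intro mult_left_mono power_mono) auto
  finally have "log_ratio r t < 3 * log_ratio 1 t"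
    using assms \<open>r < t\<close> by (intro log_ratio_lt_three) auto
  also have "\<dots> \<le> 3 * r * log_ratio 1 t"
    using assms log_ratio_pos[of 1 t] \<open>r < t\<close> by simp
  finally show ?thesis .
qed

lemma log_ratio_bound_far:
  assumes "0 < r" "1 < t" "r < t" and far: "3 * r^2 < 2 * t^2"
  shows "log_ratio r t < 3 * r * log_ratio 1 t"
proof -
  have gap: "0 < t^2 - r^2" using assms by (simp add: power_strict_mono)
  have "log_ratio r t \<le> 2 * r * t / (t^2 - r^2)"
    using assms by (intro log_ratio_upper) auto
  also have "\<dots> < 6 * r / t"
  proof -
    have "6*r*(t^2 - r^2) - 2*r*t*t = 2*r*(2*t^2 - 3*r^2)"
      by (simp add: power2_eq_square algebra_simps)
    also have "\<dots> > 0" using assms by simp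
    finally show ?thesis using gap assms by (simp add: divide_simps)
  qed
  also have "\<dots> \<le> 3 * r * log_ratio 1 t"
    using log_ratio_one_lower[OF \<open>1 < t\<close>] assms mult_left_mono[of "2/t" _ "3*r"] by simp
  finally show ?thesis .
qed

lemma log_ratio_bound:
  assumes "1 < r" "(3*r - 1)/2 \<le> t"
  shows "log_ratio r t < 3 * r * log_ratio 1 t"
proof (cases "r \<le> 2")
  case True
  show ?thesis by (rule log_ratio_bound_small_r[OF assms(1) True assms(2)])
next
  case False
  hence "5*r/4 \<le> t" using assms by simp
  hence "(5*r/4)^2 \<le> t^2" using assms by (intro power_mono) auto
  moreover have "(5*r/4)^2 = 25/16 * r^2" by (simp add: power_divide)
  moreover have "0 < r^2" using assms by simp
  ultimately have "3 * r^2 < 2 * t^2" by linarith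
  thus ?thesis using assms False by (intro log_ratio_bound_far) auto
qed

theorem lemma4p10:
  fixes d a b :: nat and r R x1 :: real
  assumes "d > 0" and "a > 0" and "b > 0"
    and "r = (real d + 2 * real b) / real d"
    and "R = (real a + real d) / real d"
    and "R \<ge> 3 * r"
    and "x1 > r" and "Phi (real d) (real a) r x1 = 0"
  shows "x1 - r < (r - 1) / 2"
proof (rule ccontr)
  assume "\<not> ?thesis"
  hence far: "(3*r - 1)/2 \<le> x1" by simp
  have "r = 1 + 2 * real b / real d" using assms(1,4) by (simp add: field_simps)
  hence "1 < r" using assms(1,3) by simp
  have "real a + real d = real d * R" using assms(1,5) by simp
  hence "real d * log_ratio r x1 = real d * (R * log_ratio 1 x1)"
    using assms(8) Phi_eq_log_ratio[OF \<open>1 < r\<close> assms(7)] by simp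
  hence "log_ratio r x1 = R * log_ratio 1 x1" using assms(1) by simp
  also have "\<dots> \<ge> 3 * r * log_ratio 1 x1"
    using assms(6,7) \<open>1 < r\<close> log_ratio_pos[of 1 x1] by (simp add: mult_right_mono)
  finally show False using log_ratio_bound[OF \<open>1 < r\<close> far] by simp
qed

end
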